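(* Let $\Gamma=(K_n,\sigma)$ be a signed complete graph and let $\{X_1,\ldots,X_p,X_{p+1},\ldots,X_{p+q}\}$ be a partition of $V(\Gamma)$ into nonempty sets with $|X_i|=n_i$, such that: for every $i\ne j$ all edges between $X_i$ and $X_j$ have the same sign $\epsilon_{ij}\in\{+1,-1\}$; all edges inside $X_i$ are positive for $i=1,\ldots,p$; and all edges inside $X_i$ are negative for $i=p+1,\ldots,p+q$. Let $B=(b_{ij})$ be the $(p+q)\times(p+q)$ quotient matrix, i.e. $b_{ij}$ is the (constant) row sum of the submatrix of $A(\Gamma)$ with rows indexed by $X_i$ and columns by $X_j$ (so $b_{ii}=n_i-1$ for $i\le p$, $b_{ii}=-(n_i-1)$ for $i>p$, and $b_{ij}=\epsilon_{ij}n_j$ for $i\neq j$). If $m_1=\sum_{i=1}^p n_i$ and $m_2=\sum_{i=p+1}^{p+q}n_i$, then $$\varphi(\Gamma,\lambda)=(\lambda+1)^{m_1-p}(\lambda-1)^{m_2-q}\varphi(B,\lambda).$$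
   Context: A signed complete graph $(K_n,\sigma)$ assigns a sign $\pm$ to each edge of $K_n$; its adjacency matrix $A(\Gamma)$ has off-diagonal entries $\sigma(v_iv_j)\in\{1,-1\}$ and zero diagonal. $\varphi(M,\lambda)=\det(\lambda I-M)$ denotes the characteristic polynomial of a matrix $M$, and $\varphi(\Gamma,\lambda)=\varphi(A(\Gamma),\lambda)$. *)

theory Defs
  imports "Jordan_Normal_Form.Char_Poly"
begin

definition signed_complete_adj :: "nat \<Rightarrow> real mat \<Rightarrow> bool" where
  "signed_complete_adj n A \<longleftrightarrow> A \<in> carrier_mat n n \<and>
     (\<forall>i<n. A $$ (i,i) = 0) \<and>
     (\<forall>i<n. \<forall>j<n. i \<noteq> j \<longrightarrow> (A $$ (i,j) = 1 \<or> A $$ (i,j) = -1) \<and> A $$ (i,j) = A $$ (j,i))"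

definition cell :: "nat \<Rightarrow> (nat \<Rightarrow> nat) \<Rightarrow> nat \<Rightarrow> nat set" where
  "cell n part i = {v. v < n \<and> part v = i}"

text \<open>Quotient matrix: entry (i,j) is the row sum of the block X_i x X_j,
  taken at a (any) representative row u of X_i.\<close>
definition quotient_matrix :: "real mat \<Rightarrow> (nat \<Rightarrow> nat) \<Rightarrow> nat \<Rightarrow> real mat" where
  "quotient_matrix A part k = mat k k (\<lambda>(i,j).
     (\<Sum>v\<in>cell (dim_row A) part j. A $$ (SOME u. u \<in> cell (dim_row A) part i, v)))"

end

theory Submission
  imports Defs
begin

(* Let S be the n x k indicator matrix of the partition.  If A agrees with c (part u) (part v)
   off the diagonal and has diagonal entries c i i - d i on X_i, then \<lambda>I - A = \<Lambda> - S Y with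
   \<Lambda> = diag (\<lambda> + d (part u)) and Y = C S^T, while the quotient matrix B satisfies
   \<lambda>I - B = D - Y S with D = diag (\<lambda> + d i).  Since \<Lambda> S = S D, Sylvester's identity
   det (I - S Y') = det (I - Y' S) for Y' = D^-1 Y gives
   det (\<lambda>I - A) det D = det \<Lambda> det (\<lambda>I - B) whenever D is invertible, hence as polynomials.
   Cancelling det D leaves the factor prod_i (\<lambda> + d i)^(n_i - 1); for a signed complete graph
   d i is 1 on the positive cells and -1 on the negative ones. *)

lemma det_one_minus_mult_commute:
  fixes S :: "'a :: idom mat"
  assumes S: "S \<in> carrier_mat n k" and Y: "Y \<in> carrier_mat k n"
  shows "det (1\<^sub>m n - S * Y) = det (1\<^sub>m k - Y * S)"
proof -
  define M where "M = four_block_mat (1\<^sub>m n) S Y (1\<^sub>m k)"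
  define E where "E = four_block_mat (1\<^sub>m n) (0\<^sub>m n k) (- Y) (1\<^sub>m k)"
  have M: "M \<in> carrier_mat (n + k) (n + k)" and E: "E \<in> carrier_mat (n + k) (n + k)"
    using S Y by (auto simp: M_def E_def)
  have det_E: "det E = 1"
    unfolding E_def using Y by (subst det_four_block_mat_upper_right_zero[of _ n _ k]) auto
  have ME: "M * E = four_block_mat (1\<^sub>m n - S * Y) S (0\<^sub>m k n) (1\<^sub>m k)"
    unfolding M_def E_def using S Y by (subst mult_four_block_mat[of _ n n _ k _ k]) auto
  have EM: "E * M = four_block_mat (1\<^sub>m n) S (0\<^sub>m k n) (1\<^sub>m k - Y * S)"
    unfolding M_def E_def using S Y by (subst mult_four_block_mat[of _ n n _ k _ k]) auto
  have "det (1\<^sub>m n - S * Y) = det (M * E)"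
    unfolding ME using S Y by (subst det_four_block_mat_lower_left_zero[of _ n _ k]) auto
  also have "\<dots> = det (E * M)"
    using det_mult[OF M E] det_mult[OF E M] by simp
  also have "\<dots> = det (1\<^sub>m k - Y * S)"
    unfolding EM using S Y by (subst det_four_block_mat_lower_left_zero[of _ n _ k]) auto
  finally show ?thesis .
qed

lemma det_mat_diag: "det (mat_diag n f) = (\<Prod>i<n. f i)"
  by (subst det_upper_triangular[of _ n])
    (auto simp: upper_triangular_def mat_diag_def prod_list_diag_prod lessThan_atLeast0)

lemma det_mat_diag_minus_mult:
  fixes S :: "'a :: field mat"
  assumes S: "S \<in> carrier_mat n k" and Y: "Y \<in> carrier_mat k n"
    and e_nonzero: "\<forall>i<k. e i \<noteq> 0"
    and intertwine: "mat_diag n f * S = S * mat_diag k e"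
  shows "det (mat_diag n f - S * Y) * (\<Prod>i<k. e i) = (\<Prod>u<n. f u) * det (mat_diag k e - Y * S)"
proof -
  define Y' where "Y' = mat_diag k (\<lambda>i. inverse (e i)) * Y"
  have Y': "Y' \<in> carrier_mat k n" unfolding Y'_def by (rule mult_carrier_mat[OF mat_diag_dim Y])
  have e_Y': "mat_diag k e * Y' = Y"
  proof -
    have "mat_diag k e * mat_diag k (\<lambda>i. inverse (e i)) = mat_diag k (\<lambda>i. e i * inverse (e i))"
      by (rule mat_diag_diag)
    also have "\<dots> = 1\<^sub>m k"
      using e_nonzero by (intro eq_matI) (auto simp: mat_diag_def)
    finally have "mat_diag k e * mat_diag k (\<lambda>i. inverse (e i)) = 1\<^sub>m k" .
    then show ?thesis
      unfolding Y'_def using Y by (simp flip: assoc_mult_mat[of _ k k _ k])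
  qed
  have "mat_diag n f * (S * Y') = (mat_diag n f * S) * Y'"
    by (rule assoc_mult_mat[OF mat_diag_dim S Y', symmetric])
  also have "\<dots> = S * (mat_diag k e * Y')"
    unfolding intertwine by (rule assoc_mult_mat[OF S mat_diag_dim Y'])
  finally have "mat_diag n f * (S * Y') = S * Y"
    unfolding e_Y' .
  then have "mat_diag n f - S * Y = mat_diag n f * (1\<^sub>m n - S * Y')"
    by (simp add: mult_minus_distrib_mat[OF mat_diag_dim one_carrier_mat mult_carrier_mat[OF S Y']]
        right_mult_one_mat[OF mat_diag_dim])
  then have "det (mat_diag n f - S * Y) = (\<Prod>u<n. f u) * det (1\<^sub>m n - S * Y')"
    using det_mult[OF mat_diag_dim minus_carrier_mat[OF mult_carrier_mat[OF S Y']]]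
    by (simp add: det_mat_diag)
  moreover have "mat_diag k e - Y * S = mat_diag k e * (1\<^sub>m k - Y' * S)"
    by (simp add: mult_minus_distrib_mat[OF mat_diag_dim one_carrier_mat mult_carrier_mat[OF Y' S]]
        right_mult_one_mat[OF mat_diag_dim] e_Y' flip: assoc_mult_mat[OF mat_diag_dim Y' S])
  then have "det (mat_diag k e - Y * S) = (\<Prod>i<k. e i) * det (1\<^sub>m k - Y' * S)"
    using det_mult[OF mat_diag_dim minus_carrier_mat[OF mult_carrier_mat[OF Y' S]]]
    by (simp add: det_mat_diag)
  ultimately show ?thesis
    using det_one_minus_mult_commute[OF S Y'] by simp
qed

lemma poly_eqI_cofinite:
  fixes p q :: "'a :: {idom, ring_char_0} poly"
  assumes "finite F" and "\<And>x. x \<notin> F \<Longrightarrow> poly p x = poly q x"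
  shows "p = q"
proof (rule ccontr)
  assume "p \<noteq> q"
  then have "finite {x. poly (p - q) x = 0}" by (intro poly_roots_finite) simp
  moreover have "UNIV \<subseteq> F \<union> {x. poly (p - q) x = 0}" using assms(2) by auto
  ultimately have "finite (UNIV :: 'a set)" using assms(1) by (meson finite_UnI finite_subset)
  then show False using infinite_UNIV_char_0 by blast
qed

definition block_constant_mat ::
    "nat \<Rightarrow> (nat \<Rightarrow> nat) \<Rightarrow> (nat \<Rightarrow> nat \<Rightarrow> 'a) \<Rightarrow> (nat \<Rightarrow> 'a) \<Rightarrow> 'a :: ring_1 mat" where
  "block_constant_mat n part c d =
     mat n n (\<lambda>(u, v). c (part u) (part v) - (if u = v then d (part u) else 0))"

definition block_quotient_mat ::
    "nat \<Rightarrow> (nat \<Rightarrow> nat) \<Rightarrow> nat \<Rightarrow> (nat \<Rightarrow> nat \<Rightarrow> 'a) \<Rightarrow> (nat \<Rightarrow> 'a) \<Rightarrow> 'a :: ring_1 mat" where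
  "block_quotient_mat n part k c d =
     mat k k (\<lambda>(i, j). of_nat (card (cell n part j)) * c i j - (if i = j then d i else 0))"

lemma block_constant_mat_carrier: "block_constant_mat n part c d \<in> carrier_mat n n"
  by (simp add: block_constant_mat_def)

lemma block_quotient_mat_carrier: "block_quotient_mat n part k c d \<in> carrier_mat k k"
  by (simp add: block_quotient_mat_def)

lemma char_poly_block_constant_mat_mult:
  fixes c :: "nat \<Rightarrow> nat \<Rightarrow> 'a :: field_char_0"
  assumes part: "\<forall>u<n. part u < k"
  shows "char_poly (block_constant_mat n part c d) * (\<Prod>i<k. [:d i, 1:]) =
    (\<Prod>u<n. [:d (part u), 1:]) * char_poly (block_quotient_mat n part k c d)"
proof (rule poly_eqI_cofinite)
  show "finite ((\<lambda>i. - d i) ` {..<k})" by simp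
  fix x assume x: "x \<notin> (\<lambda>i. - d i) ` {..<k}"
  define S where "S = mat n k (\<lambda>(u, i). if part u = i then 1 else (0 :: 'a))"
  define Y where "Y = mat k n (\<lambda>(i, v). c i (part v))"
  have S: "S \<in> carrier_mat n k" and Y: "Y \<in> carrier_mat k n"
    by (simp_all add: S_def Y_def)
  have A: "- char_matrix (block_constant_mat n part c d) x = mat_diag n (\<lambda>u. x + d (part u)) - S * Y"
    using part by (intro eq_matI)
      (auto simp: block_constant_mat_def char_matrix_def mat_diag_def S_def Y_def scalar_prod_def
        if_distrib[of "\<lambda>a. a * _"] cong: if_cong)
  have "Y * S = mat k k (\<lambda>(i, j). of_nat (card (cell n part j)) * c i j)"
  proof (rule eq_matI)
    fix i j assume "i < dim_row (mat k k (\<lambda>(i, j). of_nat (card (cell n part j)) * c i j))"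
      and "j < dim_col (mat k k (\<lambda>(i, j). of_nat (card (cell n part j)) * c i j))"
    moreover have "(\<Sum>v<n. c i (part v) * (if part v = j then 1 else 0)) = (\<Sum>v\<in>cell n part j. c i j)"
      by (rule sum.mono_neutral_cong_right) (auto simp: cell_def)
    ultimately show "(Y * S) $$ (i, j) =
        mat k k (\<lambda>(i, j). of_nat (card (cell n part j)) * c i j) $$ (i, j)"
      by (simp add: S_def Y_def scalar_prod_def lessThan_atLeast0)
  qed (simp_all add: S_def Y_def)
  then have B: "- char_matrix (block_quotient_mat n part k c d) x = mat_diag k (\<lambda>i. x + d i) - Y * S"
    by (intro eq_matI) (auto simp: block_quotient_mat_def char_matrix_def mat_diag_def)
  have intertwine: "mat_diag n (\<lambda>u. x + d (part u)) * S = S * mat_diag k (\<lambda>i. x + d i)"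
    unfolding mat_diag_mult_left[OF S] mat_diag_mult_right[OF S] by (auto simp: S_def)
  have "\<forall>i<k. x + d i \<noteq> 0"
    using x by (force simp: add_eq_0_iff)
  from det_mat_diag_minus_mult[OF S Y this intertwine]
  show "poly (char_poly (block_constant_mat n part c d) * (\<Prod>i<k. [:d i, 1:])) x =
    poly ((\<Prod>u<n. [:d (part u), 1:]) * char_poly (block_quotient_mat n part k c d)) x"
    by (simp add: char_poly_matrix[OF block_constant_mat_carrier] poly_prod A B add.commute
        char_poly_matrix[OF block_quotient_mat_carrier])
qed

lemma char_poly_block_constant_mat:
  fixes c :: "nat \<Rightarrow> nat \<Rightarrow> 'a :: field_char_0"
  assumes part: "\<forall>u<n. part u < k" and nonempty: "\<forall>i<k. cell n part i \<noteq> {}"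
  shows "char_poly (block_constant_mat n part c d) =
    (\<Prod>i<k. [:d i, 1:] ^ (card (cell n part i) - 1)) * char_poly (block_quotient_mat n part k c d)"
proof -
  have "(\<Prod>u<n. [:d (part u), 1:]) = (\<Prod>i<k. \<Prod>u\<in>{u \<in> {..<n}. part u = i}. [:d (part u), 1:])"
    using part by (intro prod.group[symmetric]) auto
  also have "\<dots> = (\<Prod>i<k. [:d i, 1:] ^ (card (cell n part i) - 1) * [:d i, 1:])"
  proof (rule prod.cong[OF refl])
    fix i assume "i \<in> {..<k}"
    then have card_Suc: "card (cell n part i) = Suc (card (cell n part i) - 1)"
      using nonempty by (simp add: cell_def card_gt_0_iff)
    have "(\<Prod>u\<in>{u \<in> {..<n}. part u = i}. [:d (part u), 1:]) = (\<Prod>u\<in>cell n part i. [:d i, 1:])"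
      by (intro prod.cong) (auto simp: cell_def)
    also have "\<dots> = [:d i, 1:] ^ (card (cell n part i) - 1) * [:d i, 1:]"
      by (metis card_Suc power_Suc2 prod_constant)
    finally show "(\<Prod>u\<in>{u \<in> {..<n}. part u = i}. [:d (part u), 1:]) =
        [:d i, 1:] ^ (card (cell n part i) - 1) * [:d i, 1:]" .
  qed
  also have "\<dots> = (\<Prod>i<k. [:d i, 1:] ^ (card (cell n part i) - 1)) * (\<Prod>i<k. [:d i, 1:])"
    by (rule prod.distrib)
  finally have prod_eq: "(\<Prod>u<n. [:d (part u), 1:]) =
    (\<Prod>i<k. [:d i, 1:] ^ (card (cell n part i) - 1)) * (\<Prod>i<k. [:d i, 1:])" .
  have "char_poly (block_constant_mat n part c d) * (\<Prod>i<k. [:d i, 1:]) =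
    (\<Prod>u<n. [:d (part u), 1:]) * char_poly (block_quotient_mat n part k c d)"
    by (rule char_poly_block_constant_mat_mult[OF part])
  also have "\<dots> = (\<Prod>i<k. [:d i, 1:] ^ (card (cell n part i) - 1)) *
    char_poly (block_quotient_mat n part k c d) * (\<Prod>i<k. [:d i, 1:])"
    unfolding prod_eq by (simp only: ac_simps)
  finally show ?thesis by simp
qed

lemma quotient_matrix_block_constant_mat:
  assumes nonempty: "\<forall>i<k. cell n part i \<noteq> {}"
  shows "quotient_matrix (block_constant_mat n part c d) part k = block_quotient_mat n part k c d"
proof (rule eq_matI)
  fix i j assume "i < dim_row (block_quotient_mat n part k c d)"
    and "j < dim_col (block_quotient_mat n part k c d)"
  then have ij: "i < k" "j < k" by (simp_all add: block_quotient_mat_def)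
  define r where "r = (SOME u. u \<in> cell n part i)"
  have r: "r < n" "part r = i"
    using someI_ex[of "\<lambda>u. u \<in> cell n part i"] nonempty ij by (auto simp: r_def cell_def)
  have "quotient_matrix (block_constant_mat n part c d) part k $$ (i, j) =
      (\<Sum>v\<in>cell n part j. block_constant_mat n part c d $$ (r, v))"
    using ij by (simp add: quotient_matrix_def r_def dim_row_mat(1)[of n n] block_constant_mat_def)
  also have "\<dots> = (\<Sum>v\<in>cell n part j. c i j - (if r = v then d i else 0))"
    using r by (intro sum.cong) (auto simp: block_constant_mat_def cell_def)
  also have "\<dots> = block_quotient_mat n part k c d $$ (i, j)"
    using ij r by (auto simp: block_quotient_mat_def sum_subtractf cell_def)
  finally show "quotient_matrix (block_constant_mat n part c d) part k $$ (i, j) =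
    block_quotient_mat n part k c d $$ (i, j)" .
qed (simp_all add: quotient_matrix_def block_quotient_mat_def)

lemma ex_block_constant_mat:
  fixes A :: "'a :: ring_1 mat"
  assumes A: "A \<in> carrier_mat n n" and diag: "\<forall>u<n. A $$ (u, u) = 0"
    and part: "\<forall>u<n. part u < k" and nonempty: "\<forall>i<k. cell n part i \<noteq> {}"
    and between: "\<forall>i<k. \<forall>j<k. i \<noteq> j \<longrightarrow>
      (\<exists>e. \<forall>u\<in>cell n part i. \<forall>v\<in>cell n part j. A $$ (u, v) = e)"
    and inside: "\<forall>i<k. \<forall>u\<in>cell n part i. \<forall>v\<in>cell n part i. u \<noteq> v \<longrightarrow> A $$ (u, v) = d i"
  shows "\<exists>c. A = block_constant_mat n part c d"
proof -
  define rep where "rep i = (SOME u. u \<in> cell n part i)" for i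
  define c where "c i j = (if i = j then d i else A $$ (rep i, rep j))" for i j
  have rep: "rep i \<in> cell n part i" if "i < k" for i
    using someI_ex[of "\<lambda>u. u \<in> cell n part i"] nonempty that by (auto simp: rep_def)
  have "A $$ (u, v) = c (part u) (part v)" if "u < n" "v < n" "u \<noteq> v" for u v
  proof (cases "part u = part v")
    case True
    then show ?thesis using inside part that by (auto simp: c_def cell_def)
  next
    case False
    have "part u < k" "part v < k" using part that by simp_all
    with between False obtain e
      where "\<forall>u'\<in>cell n part (part u). \<forall>v'\<in>cell n part (part v). A $$ (u', v') = e"
      by blast
    moreover have "u \<in> cell n part (part u)" "v \<in> cell n part (part v)"
      using that by (simp_all add: cell_def)
    ultimately show ?thesis using rep part that False by (simp add: c_def)
  qed
  then have "A = block_constant_mat n part c d"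
    using A diag by (intro eq_matI) (auto simp: block_constant_mat_def c_def)
  then show ?thesis by blast
qed

theorem char_poly_eq_prod_mult_char_poly_quotient_matrix:
  fixes A :: "real mat"
  assumes A: "A \<in> carrier_mat n n" and diag: "\<forall>u<n. A $$ (u, u) = 0"
    and part: "\<forall>u<n. part u < k" and nonempty: "\<forall>i<k. cell n part i \<noteq> {}"
    and between: "\<forall>i<k. \<forall>j<k. i \<noteq> j \<longrightarrow>
      (\<exists>e. \<forall>u\<in>cell n part i. \<forall>v\<in>cell n part j. A $$ (u, v) = e)"
    and inside: "\<forall>i<k. \<forall>u\<in>cell n part i. \<forall>v\<in>cell n part i. u \<noteq> v \<longrightarrow> A $$ (u, v) = d i"
  shows "char_poly A =
    (\<Prod>i<k. [:d i, 1:] ^ (card (cell n part i) - 1)) * char_poly (quotient_matrix A part k)"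
proof -
  obtain c where "A = block_constant_mat n part c d"
    using ex_block_constant_mat[OF A diag part nonempty between inside] by blast
  then show ?thesis
    using char_poly_block_constant_mat[OF part nonempty] quotient_matrix_block_constant_mat[OF nonempty]
    by simp
qed

lemma prod_power_diff_one:
  fixes f :: "'b \<Rightarrow> nat"
  assumes "\<And>i. i \<in> I \<Longrightarrow> 1 \<le> f i"
  shows "(\<Prod>i\<in>I. a ^ (f i - 1)) = a ^ (sum f I - card I)"
proof -
  have "(\<Sum>i\<in>I. f i - 1) = sum f I - card I"
    using assms sum_subtractf_nat[of I "\<lambda>_. 1" f] by simp
  then show ?thesis by (simp flip: power_sum)
qed

theorem theorem3p2:
  fixes A :: "real mat" and part :: "nat \<Rightarrow> nat" and n p q :: nat
  assumes adj: "signed_complete_adj n A"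
    and part_range: "\<forall>v<n. part v < p + q"
    and nonempty: "\<forall>i<p + q. cell n part i \<noteq> {}"
    and between: "\<forall>i<p + q. \<forall>j<p + q. i \<noteq> j \<longrightarrow>
        (\<exists>e::real. (e = 1 \<or> e = -1) \<and>
           (\<forall>u\<in>cell n part i. \<forall>v\<in>cell n part j. A $$ (u,v) = e))"
    and inside_pos: "\<forall>i<p. \<forall>u\<in>cell n part i. \<forall>v\<in>cell n part i. u \<noteq> v \<longrightarrow> A $$ (u,v) = 1"
    and inside_neg: "\<forall>i. p \<le> i \<and> i < p + q \<longrightarrow>
        (\<forall>u\<in>cell n part i. \<forall>v\<in>cell n part i. u \<noteq> v \<longrightarrow> A $$ (u,v) = -1)"
  shows "char_poly A =
    [:1, 1:] ^ ((\<Sum>i<p. card (cell n part i)) - p) *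
    [:-1, 1:] ^ ((\<Sum>i=p..<p+q. card (cell n part i)) - q) *
    char_poly (quotient_matrix A part (p + q))"
proof -
  define d :: "nat \<Rightarrow> real" where "d i = (if i < p then 1 else -1)" for i
  have cA: "A \<in> carrier_mat n n" and diag: "\<forall>u<n. A $$ (u, u) = 0"
    using adj by (simp_all add: signed_complete_adj_def)
  have between': "\<forall>i<p + q. \<forall>j<p + q. i \<noteq> j \<longrightarrow>
      (\<exists>e. \<forall>u\<in>cell n part i. \<forall>v\<in>cell n part j. A $$ (u, v) = e)"
    using between by meson
  have inside: "\<forall>i<p + q. \<forall>u\<in>cell n part i. \<forall>v\<in>cell n part i. u \<noteq> v \<longrightarrow> A $$ (u, v) = d i"
  proof (intro allI impI ballI)
    fix i u v assume "i < p + q" "u \<in> cell n part i" "v \<in> cell n part i" "u \<noteq> v"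
    then show "A $$ (u, v) = d i"
      using inside_pos inside_neg by (cases "i < p") (auto simp: d_def not_less)
  qed
  have card_pos: "1 \<le> card (cell n part i)" if "i < p + q" for i
    using nonempty that by (simp add: cell_def Suc_le_eq card_gt_0_iff)
  have "char_poly A = (\<Prod>i<p + q. [:d i, 1:] ^ (card (cell n part i) - 1)) *
      char_poly (quotient_matrix A part (p + q))"
    using char_poly_eq_prod_mult_char_poly_quotient_matrix[OF cA diag part_range nonempty between' inside] .
  also have "(\<Prod>i<p + q. [:d i, 1:] ^ (card (cell n part i) - 1)) =
      (\<Prod>i<p. [:d i, 1:] ^ (card (cell n part i) - 1)) *
      (\<Prod>i=p..<p+q. [:d i, 1:] ^ (card (cell n part i) - 1))"
    by (simp add: lessThan_atLeast0 prod.atLeastLessThan_concat)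
  also have "\<dots> =
      (\<Prod>i<p. [:1, 1:] ^ (card (cell n part i) - 1)) *
      (\<Prod>i=p..<p+q. [:-1, 1:] ^ (card (cell n part i) - 1))"
    by (intro arg_cong2[where f = "(*)"] prod.cong) (simp_all add: d_def)
  also have "\<dots> = [:1, 1:] ^ ((\<Sum>i<p. card (cell n part i)) - p) *
      [:-1, 1:] ^ ((\<Sum>i=p..<p+q. card (cell n part i)) - q)"
    using prod_power_diff_one[of "{..<p}" "\<lambda>i. card (cell n part i)" "[:1, 1 :: real:]"]
      prod_power_diff_one[of "{p..<p+q}" "\<lambda>i. card (cell n part i)" "[:-1, 1 :: real:]"] card_pos
    by simp
  finally show ?thesis .
qed

end
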